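(* A group $G$ is isomorphic to an automaton group if and only if $G$ is isomorphic to an expanding automaton semigroup. Likewise, a group $G$ is isomorphic to a self-similar group if and only if $G$ is isomorphic to an expanding self-similar semigroup.
   Context: An expanding automaton is a quadruple $(Q,\Sigma,t,o)$ with $Q$ a set of states, $\Sigma$ a finite alphabet, $t:Q\times\Sigma\to Q$ and $o:Q\times\Sigma\to\Sigma^+$; a synchronous automaton has $o:Q\times\Sigma\to\Sigma$, and it is invertible if for each $q$ the map $\sigma\mapsto o(q,\sigma)$ is a permutation of $\Sigma$. Each state $q$ induces $q:\Sigma^*\to\Sigma^*$ by $q(\emptyset)=\emptyset$, $q(\sigma w)=o(q,\sigma)\,q'(w)$ with $q'=t(q,\sigma)$. An expanding automaton semigroup is the semigroup of maps generated under composition by the states of an expanding automaton with finitely many states; an expanding self-similar semigroup is the same allowing infinitely many states. An automaton group is the group generated by the states of a finite-state invertible synchronous automaton (the states act as bijections); a self-similar group is the group generated by the states of an invertible synchronous automaton with possibly infinitely many states. *)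

theory Defs
  imports "HOL-Algebra.Algebra"
begin

primrec induced :: "('q \<Rightarrow> nat \<Rightarrow> 'q) \<Rightarrow> ('q \<Rightarrow> nat \<Rightarrow> nat list) \<Rightarrow> 'q \<Rightarrow> nat list \<Rightarrow> nat list" where
  "induced t out q [] = []"
| "induced t out q (a # w) = out q a @ induced t out (t q a) w"

definition state_map :: "nat set \<Rightarrow> ('q \<Rightarrow> nat \<Rightarrow> 'q) \<Rightarrow> ('q \<Rightarrow> nat \<Rightarrow> nat list) \<Rightarrow> 'q \<Rightarrow> (nat list \<Rightarrow> nat list)" where
  "state_map S t out q = (\<lambda>w \<in> lists S. induced t out q w)"

definition expanding_automaton :: "'q set \<Rightarrow> nat set \<Rightarrow> ('q \<Rightarrow> nat \<Rightarrow> 'q) \<Rightarrow> ('q \<Rightarrow> nat \<Rightarrow> nat list) \<Rightarrow> bool" where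
  "expanding_automaton Q S t out \<longleftrightarrow> finite S \<and>
     (\<forall>q\<in>Q. \<forall>a\<in>S. t q a \<in> Q \<and> out q a \<in> lists S \<and> out q a \<noteq> [])"

definition invertible_synchronous_automaton :: "'q set \<Rightarrow> nat set \<Rightarrow> ('q \<Rightarrow> nat \<Rightarrow> 'q) \<Rightarrow> ('q \<Rightarrow> nat \<Rightarrow> nat list) \<Rightarrow> bool" where
  "invertible_synchronous_automaton Q S t out \<longleftrightarrow> finite S \<and>
     (\<forall>q\<in>Q. \<forall>a\<in>S. t q a \<in> Q \<and> length (out q a) = 1 \<and> hd (out q a) \<in> S) \<and>
     (\<forall>q\<in>Q. bij_betw (\<lambda>a. hd (out q a)) S S)"

inductive_set gen_semigroup :: "'a set \<Rightarrow> ('a \<Rightarrow> 'a) set \<Rightarrow> ('a \<Rightarrow> 'a) set" for A F where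
  base: "f \<in> F \<Longrightarrow> f \<in> gen_semigroup A F"
| comp: "f \<in> gen_semigroup A F \<Longrightarrow> g \<in> gen_semigroup A F \<Longrightarrow> compose A f g \<in> gen_semigroup A F"

text \<open>The semigroup of maps as an algebra structure (the unit field is irrelevant:
 HOL-Algebra's homomorphisms/isomorphisms only refer to carrier and mult).\<close>
definition map_semigroup :: "'a set \<Rightarrow> ('a \<Rightarrow> 'a) set \<Rightarrow> ('a \<Rightarrow> 'a) monoid" where
  "map_semigroup A F = \<lparr>carrier = gen_semigroup A F, monoid.mult = compose A, one = (\<lambda>x\<in>A. x)\<rparr>"

definition automaton_semigroup_of :: "'q set \<Rightarrow> nat set \<Rightarrow> ('q \<Rightarrow> nat \<Rightarrow> 'q) \<Rightarrow> ('q \<Rightarrow> nat \<Rightarrow> nat list) \<Rightarrow> (nat list \<Rightarrow> nat list) monoid" where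
  "automaton_semigroup_of Q S t out = map_semigroup (lists S) (state_map S t out ` Q)"

definition automaton_group_of :: "'q set \<Rightarrow> nat set \<Rightarrow> ('q \<Rightarrow> nat \<Rightarrow> 'q) \<Rightarrow> ('q \<Rightarrow> nat \<Rightarrow> nat list) \<Rightarrow> (nat list \<Rightarrow> nat list) monoid" where
  "automaton_group_of Q S t out =
     (BijGroup (lists S)) \<lparr>carrier := generate (BijGroup (lists S)) (state_map S t out ` Q)\<rparr>"

definition iso_automaton_group :: "('g, 'b) monoid_scheme \<Rightarrow> bool" where
  "iso_automaton_group G \<longleftrightarrow> (\<exists>(Q::nat set) S t out. finite Q \<and>
     invertible_synchronous_automaton Q S t out \<and> G \<cong> automaton_group_of Q S t out)"

definition iso_expanding_automaton_semigroup :: "('g, 'b) monoid_scheme \<Rightarrow> bool" where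
  "iso_expanding_automaton_semigroup G \<longleftrightarrow> (\<exists>(Q::nat set) S t out. finite Q \<and>
     expanding_automaton Q S t out \<and> G \<cong> automaton_semigroup_of Q S t out)"

text \<open>States range over a type of cardinality
 of the continuum (nat set), which suffices since there are only continuum many
 maps on S*, and states inducing the same map can be identified.\<close>
definition iso_self_similar_group :: "('g, 'b) monoid_scheme \<Rightarrow> bool" where
  "iso_self_similar_group G \<longleftrightarrow> (\<exists>(Q::nat set set) S t out.
     invertible_synchronous_automaton Q S t out \<and> G \<cong> automaton_group_of Q S t out)"

definition iso_expanding_self_similar_semigroup :: "('g, 'b) monoid_scheme \<Rightarrow> bool" where
  "iso_expanding_self_similar_semigroup G \<longleftrightarrow> (\<exists>(Q::nat set set) S t out.
     expanding_automaton Q S t out \<and> G \<cong> automaton_semigroup_of Q S t out)"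

end

theory Submission
  imports Defs
begin

(* Group => semigroup: given an invertible synchronous automaton, add a state acting as the
   identity and, for every state q, a state acting as q^-1 (the inverse automaton reads the
   output letters of q).  The semigroup generated by these states is the group generated by
   the original states, and the new automaton is expanding.

   Semigroup => group: let T be the semigroup of an expanding automaton over S, and suppose T
   is a group under composition with identity e.  Since e is idempotent and all maps in T are
   length non-decreasing, e fixes precisely the words over C = {a in S. e [a] = [a]}.  Every f
   in T maps C* bijectively and length-preservingly onto itself, so the restricted automaton
   over C is invertible synchronous, and restriction to C* is an isomorphism from T onto the
   group it generates.  The group structure of T is used only through its identity, its
   inverses and cancellation of idempotents. *)

definition reached :: "('q \<Rightarrow> nat \<Rightarrow> 'q) \<Rightarrow> 'q \<Rightarrow> nat list \<Rightarrow> 'q" where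
  "reached t q u = fold (\<lambda>a q. t q a) u q"

lemma induced_append:
  "induced t out q (u @ v) = induced t out q u @ induced t out (reached t q u) v"
  by (induction u arbitrary: q) (auto simp: reached_def)

lemma reached_in:
  assumes "\<forall>q\<in>Q. \<forall>a\<in>S. t q a \<in> Q" "q \<in> Q" "u \<in> lists S"
  shows "reached t q u \<in> Q"
  using assms(2,3) by (induction u arbitrary: q) (auto simp: reached_def assms(1))

lemma gen_semigroup_image:
  assumes hom: "\<And>f g. f \<in> gen_semigroup A F \<Longrightarrow> g \<in> gen_semigroup A F \<Longrightarrow>
                  \<rho> (compose A f g) = compose B (\<rho> f) (\<rho> g)"
  shows "\<rho> ` gen_semigroup A F = gen_semigroup B (\<rho> ` F)"
proof
  show "\<rho> ` gen_semigroup A F \<subseteq> gen_semigroup B (\<rho> ` F)"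
  proof clarify
    fix f assume "f \<in> gen_semigroup A F"
    then show "\<rho> f \<in> gen_semigroup B (\<rho> ` F)"
      by induction (auto simp: hom intro: gen_semigroup.intros)
  qed
  show "gen_semigroup B (\<rho> ` F) \<subseteq> \<rho> ` gen_semigroup A F"
  proof
    fix h assume "h \<in> gen_semigroup B (\<rho> ` F)"
    then show "h \<in> \<rho> ` gen_semigroup A F"
    proof induction
      case (base h)
      then show ?case by (auto intro: gen_semigroup.base)
    next
      case (comp h1 h2)
      then obtain f1 f2 where "f1 \<in> gen_semigroup A F" "f2 \<in> gen_semigroup A F" "h1 = \<rho> f1" "h2 = \<rho> f2"
        by blast
      then show ?case using hom by (metis gen_semigroup.comp image_eqI)
    qed
  qed
qed

lemma BijGroup_simps:
  "carrier (BijGroup A) = Bij A"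
  "\<one>\<^bsub>BijGroup A\<^esub> = (\<lambda>x\<in>A. x)"
  "f \<in> Bij A \<Longrightarrow> g \<in> Bij A \<Longrightarrow> f \<otimes>\<^bsub>BijGroup A\<^esub> g = compose A f g"
  by (simp_all add: BijGroup_def)

lemma Bij_inverse_pair:
  assumes "f \<in> extensional A" "g \<in> extensional A" "f ` A \<subseteq> A" "g ` A \<subseteq> A"
    and "\<And>x. x \<in> A \<Longrightarrow> g (f x) = x" "\<And>x. x \<in> A \<Longrightarrow> f (g x) = x"
  shows "f \<in> Bij A \<and> g \<in> Bij A \<and> inv\<^bsub>BijGroup A\<^esub> f = g"
proof -
  have "bij_betw f A A" by (rule bij_betw_byWitness[where f' = g]) (use assms in auto)
  moreover have "bij_betw g A A" by (rule bij_betw_byWitness[where f' = f]) (use assms in auto)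
  ultimately have fB: "f \<in> Bij A" and gB: "g \<in> Bij A" using assms(1,2) by (auto simp: Bij_def)
  have "g \<otimes>\<^bsub>BijGroup A\<^esub> f = \<one>\<^bsub>BijGroup A\<^esub>"
    using fB gB assms(5) by (auto simp: BijGroup_simps compose_def)
  then show ?thesis using group.inv_equality[OF group_BijGroup] fB gB BijGroup_simps(1) by metis
qed

lemma generate_BijGroup_eq_gen_semigroup:
  assumes F_Bij: "F \<subseteq> Bij A"
    and identity_in: "(\<lambda>x\<in>A. x) \<in> gen_semigroup A F"
    and inv_closed: "\<And>f. f \<in> F \<Longrightarrow> inv\<^bsub>BijGroup A\<^esub> f \<in> gen_semigroup A F"
  shows "generate (BijGroup A) F = gen_semigroup A F"
proof
  have gen_Bij: "generate (BijGroup A) F \<subseteq> Bij A"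
    using group.generate_incl[OF group_BijGroup] F_Bij by (simp add: BijGroup_simps)
  show "generate (BijGroup A) F \<subseteq> gen_semigroup A F"
  proof
    fix f assume "f \<in> generate (BijGroup A) F"
    then show "f \<in> gen_semigroup A F"
    proof (induction rule: generate.induct)
      case one
      show ?case using identity_in by (simp only: BijGroup_simps)
    next
      case (incl h)
      then show ?case by (rule gen_semigroup.base)
    next
      case (inv h)
      then show ?case by (rule inv_closed)
    next
      case (eng h1 h2)
      then have "h1 \<otimes>\<^bsub>BijGroup A\<^esub> h2 = compose A h1 h2"
        using gen_Bij by (meson BijGroup_simps(3) subsetD)
      then show ?case using eng.IH by (simp add: gen_semigroup.comp)
    qed
  qed
  show "gen_semigroup A F \<subseteq> generate (BijGroup A) F"
  proof
    fix f assume "f \<in> gen_semigroup A F"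
    then show "f \<in> generate (BijGroup A) F"
    proof induction
      case (base f)
      then show ?case by (rule generate.incl)
    next
      case (comp f g)
      then have "compose A f g = f \<otimes>\<^bsub>BijGroup A\<^esub> g"
        using gen_Bij by (metis BijGroup_simps(3) subsetD)
      then show ?case using comp.IH by (simp add: generate.eng)
    qed
  qed
qed

abbreviation state_semigroup ::
    "'q set \<Rightarrow> nat set \<Rightarrow> ('q \<Rightarrow> nat \<Rightarrow> 'q) \<Rightarrow> ('q \<Rightarrow> nat \<Rightarrow> nat list) \<Rightarrow> (nat list \<Rightarrow> nat list) set" where
  "state_semigroup Q S t out \<equiv> gen_semigroup (lists S) (state_map S t out ` Q)"

lemma invertible_synchronous_is_expanding:
  assumes "invertible_synchronous_automaton Q S t out"
  shows "expanding_automaton Q S t out"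
proof -
  have "out q a \<in> lists S \<and> out q a \<noteq> []" if "length (out q a) = 1" "hd (out q a) \<in> S" for q a
    using that by (cases "out q a") auto
  then show ?thesis using assms
    unfolding invertible_synchronous_automaton_def expanding_automaton_def by blast
qed

lemma expanding_induced:
  assumes "expanding_automaton Q S t out" "q \<in> Q" "w \<in> lists S"
  shows "induced t out q w \<in> lists S \<and> length w \<le> length (induced t out q w)"
  using assms(2,3)
proof (induction w arbitrary: q)
  case Nil
  then show ?case by simp
next
  case (Cons a w)
  then have "t q a \<in> Q" "out q a \<in> lists S" "out q a \<noteq> []"
    using assms(1) by (auto simp: expanding_automaton_def)
  then show ?case using Cons.IH[of "t q a"] Cons.prems by (cases "out q a") auto
qed

lemma state_semigroup_elem:
  assumes "expanding_automaton Q S t out" "f \<in> state_semigroup Q S t out"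
  shows "f \<in> extensional (lists S) \<and> f [] = [] \<and>
         (\<forall>w\<in>lists S. f w \<in> lists S \<and> length w \<le> length (f w))"
  using assms(2)
proof induction
  case (base f)
  then obtain q where "q \<in> Q" "f = state_map S t out q" by auto
  then show ?case using expanding_induced[OF assms(1)] by (auto simp: state_map_def extensional_def)
next
  case (comp f g)
  have "compose (lists S) f g w \<in> lists S \<and> length w \<le> length (compose (lists S) f g w)"
    if w: "w \<in> lists S" for w
  proof -
    have "g w \<in> lists S" "length w \<le> length (g w)" using comp.IH(2) w by auto
    moreover from this have "f (g w) \<in> lists S" "length (g w) \<le> length (f (g w))"
      using comp.IH(1) by auto
    ultimately show ?thesis using w by (simp add: compose_eq)
  qed
  then show ?case using comp.IH by (simp add: compose_eq)
qed

lemma state_semigroup_sections: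
  assumes ea: "expanding_automaton Q S t out"
    and "f \<in> state_semigroup Q S t out" "u \<in> lists S"
  shows "\<exists>h\<in>state_semigroup Q S t out. \<forall>v\<in>lists S. f (u @ v) = f u @ h v"
  using assms(2,3)
proof (induction arbitrary: u)
  case (base f)
  then obtain q where q: "q \<in> Q" "f = state_map S t out q" by auto
  have "reached t q u \<in> Q"
    using reached_in[OF _ q(1) base.prems] ea by (auto simp: expanding_automaton_def)
  then have "state_map S t out (reached t q u) \<in> state_semigroup Q S t out"
    by (intro gen_semigroup.base imageI)
  moreover have "\<forall>v\<in>lists S. f (u @ v) = f u @ state_map S t out (reached t q u) v"
    using base.prems by (simp add: q(2) state_map_def induced_append)
  ultimately show ?case by blast
next
  case (comp f g)
  obtain hg where hg: "hg \<in> state_semigroup Q S t out" "\<forall>v\<in>lists S. g (u @ v) = g u @ hg v"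
    using comp.IH(2) comp.prems by blast
  have "g u \<in> lists S" using state_semigroup_elem[OF ea comp.hyps(2)] comp.prems by blast
  then obtain hf where hf: "hf \<in> state_semigroup Q S t out" "\<forall>v\<in>lists S. f (g u @ v) = f (g u) @ hf v"
    using comp.IH(1) by blast
  have "\<forall>v\<in>lists S. hg v \<in> lists S" using state_semigroup_elem[OF ea hg(1)] by blast
  then have "\<forall>v\<in>lists S. compose (lists S) f g (u @ v) = compose (lists S) f g u @ compose (lists S) hf hg v"
    using comp.prems hg(2) hf(2) by (simp add: compose_def)
  then show ?case using hf(1) hg(1) by (blast intro: gen_semigroup.comp)
qed

lemma group_iso_state_semigroup:
  assumes "group G" "G \<cong> automaton_semigroup_of Q S t out"
  shows "\<exists>e. group \<lparr>carrier = state_semigroup Q S t out, monoid.mult = compose (lists S), one = e\<rparr>"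
proof -
  obtain \<phi> where "\<phi> \<in> iso G (automaton_semigroup_of Q S t out)"
    using assms(2) by (auto simp: is_iso_def)
  then have "group ((automaton_semigroup_of Q S t out)\<lparr>one := \<phi> \<one>\<^bsub>G\<^esub>\<rparr>)"
    by (rule group.iso_imp_img_group[OF assms(1)])
  then show ?thesis by (auto simp: automaton_semigroup_of_def map_semigroup_def)
qed

locale expanding_group =
  fixes Q :: "'q set" and S :: "nat set" and t out and e :: "nat list \<Rightarrow> nat list"
  assumes expanding: "expanding_automaton Q S t out"
    and group: "group \<lparr>carrier = state_semigroup Q S t out, monoid.mult = compose (lists S), one = e\<rparr>"
begin

abbreviation A :: "nat list set" where
  "A \<equiv> lists S"

abbreviation T :: "(nat list \<Rightarrow> nat list) set" where
  "T \<equiv> state_semigroup Q S t out"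

lemma identity_in: "e \<in> T"
  using monoid.one_closed[OF group.is_monoid[OF group]] by simp

lemma identity_neutral: "f \<in> T \<Longrightarrow> compose A e f = f \<and> compose A f e = f"
  using monoid.l_one[OF group.is_monoid[OF group]] monoid.r_one[OF group.is_monoid[OF group]] by simp

lemma inverse_exists: "f \<in> T \<Longrightarrow> \<exists>g\<in>T. compose A g f = e \<and> compose A f g = e"
  using group.inv_closed[OF group] group.l_inv[OF group] group.r_inv[OF group] by fastforce

lemma idempotent_is_identity: "h \<in> T \<Longrightarrow> compose A h h = h \<Longrightarrow> h = e"
  using group.l_cancel_one[OF group] by fastforce

lemma expanding_elem:
  "f \<in> T \<Longrightarrow> f \<in> extensional A \<and> f [] = [] \<and> (\<forall>w\<in>A. f w \<in> A \<and> length w \<le> length (f w))"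
  using state_semigroup_elem[OF expanding] .

lemma identity_apply: "f \<in> T \<Longrightarrow> w \<in> A \<Longrightarrow> e (f w) = f w \<and> f (e w) = f w"
  using identity_neutral by (metis compose_eq)

(* If e fixes the letter a, then e reads a as a and continues as e: the section of e at a is an
   idempotent of T, hence equal to e. *)
lemma identity_cons:
  assumes a: "a \<in> S" "e [a] = [a]" and v: "v \<in> A"
  shows "e (a # v) = a # e v"
proof -
  obtain h where h: "h \<in> T" "\<forall>v\<in>A. e ([a] @ v) = e [a] @ h v"
    using state_semigroup_sections[OF expanding identity_in, of "[a]"] a(1) by auto
  then have h_cons: "e (a # v) = a # h v" if "v \<in> A" for v
    using a(2) that by simp
  have "compose A h h = h"
  proof (rule extensionalityI[where A = A])
    show "h \<in> extensional A" using expanding_elem[OF h(1)] by blast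
    fix v assume v: "v \<in> A"
    then have hv: "h v \<in> A" using expanding_elem[OF h(1)] by blast
    have "a # h (h v) = e (a # h v)" using h_cons[OF hv] by simp
    also have "\<dots> = e (e (a # v))" using h_cons[OF v] by simp
    also have "\<dots> = e (a # v)" using identity_apply[OF identity_in, of "a # v"] v a(1) by simp
    also have "\<dots> = a # h v" using h_cons[OF v] .
    finally show "compose A h h v = h v" using v by (simp add: compose_eq)
  qed simp
  then show ?thesis using idempotent_is_identity[OF h(1)] h_cons v by simp
qed

(* If e fixes a word a # v, it fixes its first letter: e never shortens words, so the output of
   e on [a] has length one. *)
lemma identity_fixed_head:
  assumes "a \<in> S" "v \<in> A" "e (a # v) = a # v"
  shows "e [a] = [a]"
proof -
  obtain h where h: "h \<in> T" "e ([a] @ v) = e [a] @ h v"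
    using state_semigroup_sections[OF expanding identity_in, of "[a]"] assms(1,2) by auto
  then have split: "e [a] @ h v = a # v" using assms(3) by simp
  have "[a] \<in> A" using assms(1) by simp
  then have "length [a] \<le> length (e [a])" using expanding_elem[OF identity_in] by blast
  moreover have "length v \<le> length (h v)" using expanding_elem[OF h(1)] assms(2) by blast
  moreover have "length (e [a]) + length (h v) = Suc (length v)"
    using arg_cong[OF split, of length] by simp
  ultimately have "length (e [a]) = 1" by simp
  then show ?thesis using split by (cases "e [a]") auto
qed

definition C :: "nat set" where
  "C = {a \<in> S. e [a] = [a]}"

lemma C_subset: "C \<subseteq> S"
  by (auto simp: C_def)

lemma lists_C: "lists C \<subseteq> A"
  using C_subset by auto

lemma identity_fixed_iff: "w \<in> A \<Longrightarrow> e w = w \<longleftrightarrow> w \<in> lists C"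
proof (induction w)
  case Nil
  then show ?case using expanding_elem[OF identity_in] by simp
next
  case (Cons a v)
  then have a: "a \<in> S" and v: "v \<in> A" by auto
  show ?case
  proof
    assume fixed: "e (a # v) = a # v"
    then have "e [a] = [a]" by (rule identity_fixed_head[OF a v])
    then show "a # v \<in> lists C"
      using fixed identity_cons[OF a _ v] Cons.IH[OF v] a by (simp add: C_def)
  next
    assume "a # v \<in> lists C"
    then show "e (a # v) = a # v"
      using identity_cons[OF a _ v] Cons.IH[OF v] by (simp add: C_def)
  qed
qed

(* e is idempotent, so every word is mapped into C*. *)
lemma identity_into_C: "w \<in> A \<Longrightarrow> e w \<in> lists C"
  using identity_fixed_iff identity_apply[OF identity_in] expanding_elem[OF identity_in] by metis

lemma identity_on_C: "w \<in> lists C \<Longrightarrow> e w = w"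
  using identity_fixed_iff lists_C by blast

(* Every element of T preserves C* and the length of words over C: composing with its inverse
   gives the identity on C*, and neither map shortens words. *)
lemma elem_on_C:
  assumes f: "f \<in> T" and w: "w \<in> lists C"
  shows "f w \<in> lists C \<and> length (f w) = length w"
proof -
  have wA: "w \<in> A" using w lists_C by blast
  then have "f w \<in> A" "length w \<le> length (f w)" using expanding_elem[OF f] by auto
  moreover have "e (f w) = f w" using identity_apply[OF f wA] by blast
  moreover obtain g where g: "g \<in> T" "compose A g f = e" using inverse_exists[OF f] by blast
  then have "g (f w) = w" using identity_on_C[OF w] wA by (metis compose_eq)
  moreover have "length (f w) \<le> length (g (f w))" using expanding_elem[OF g(1)] \<open>f w \<in> A\<close> by blast
  ultimately show ?thesis using identity_fixed_iff by auto
qed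

definition res :: "(nat list \<Rightarrow> nat list) \<Rightarrow> (nat list \<Rightarrow> nat list)" where
  "res f = restrict f (lists C)"

lemma res_inverse_pair:
  assumes "f \<in> T" "g \<in> T" "compose A g f = e" "compose A f g = e"
  shows "res f \<in> Bij (lists C) \<and> inv\<^bsub>BijGroup (lists C)\<^esub> (res f) = res g"
proof -
  have "g (f w) = w" "f (g w) = w" if "w \<in> lists C" for w
    using that assms identity_on_C lists_C by (metis compose_eq subsetD)+
  moreover have "f ` lists C \<subseteq> lists C" "g ` lists C \<subseteq> lists C"
    using elem_on_C assms(1,2) by blast+
  ultimately show ?thesis
    using Bij_inverse_pair[of "res f" "lists C" "res g"] by (simp add: res_def image_subset_iff)
qed

lemma res_Bij: "f \<in> T \<Longrightarrow> res f \<in> Bij (lists C)"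
  using inverse_exists res_inverse_pair by blast

lemma res_inv: "f \<in> T \<Longrightarrow> inv\<^bsub>BijGroup (lists C)\<^esub> (res f) \<in> res ` T"
  using inverse_exists res_inverse_pair by blast

lemma res_compose: "f \<in> T \<Longrightarrow> g \<in> T \<Longrightarrow> res (compose A f g) = compose (lists C) (res f) (res g)"
  using elem_on_C lists_C by (auto simp: res_def compose_def restrict_def fun_eq_iff)

lemma res_identity: "res e = (\<lambda>w\<in>lists C. w)"
  using identity_on_C by (auto simp: res_def)

(* Restriction loses no information, because f = f o e and e maps into C*. *)
lemma res_inj: "inj_on res T"
proof (rule inj_onI)
  fix f g assume fg: "f \<in> T" "g \<in> T" "res f = res g"
  show "f = g"
  proof (rule extensionalityI[where A = A])
    fix w assume w: "w \<in> A"
    then have "e w \<in> lists C" by (rule identity_into_C)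
    then have "f (e w) = g (e w)" using fg(3) by (metis res_def restrict_apply')
    then show "f w = g w" using identity_apply fg(1,2) w by metis
  qed (use expanding_elem fg in blast)+
qed

lemma state_map_C: "state_map C t out q = res (state_map S t out q)"
  using lists_C by (auto simp: res_def state_map_def restrict_def fun_eq_iff)

lemma state_map_C_Bij: "q \<in> Q \<Longrightarrow> state_map C t out q \<in> Bij (lists C)"
  using res_Bij state_map_C by (auto intro: gen_semigroup.base)

lemma output_on_C:
  assumes q: "q \<in> Q" and a: "a \<in> C"
  shows "out q a = [hd (out q a)] \<and> hd (out q a) \<in> C"
proof -
  have "state_map S t out q \<in> T" using q by (intro gen_semigroup.base imageI)
  moreover have "[a] \<in> lists C" using a by simp
  ultimately have "state_map S t out q [a] \<in> lists C \<and> length (state_map S t out q [a]) = length [a]"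
    by (rule elem_on_C)
  moreover have "state_map S t out q [a] = out q a" using a C_subset by (auto simp: state_map_def)
  ultimately have "out q a \<in> lists C \<and> length (out q a) = 1" by simp
  then show ?thesis by (cases "out q a") auto
qed

lemma restricted_invertible: "invertible_synchronous_automaton Q C t out"
  unfolding invertible_synchronous_automaton_def
proof (intro conjI ballI)
  show fin: "finite C"
    using expanding C_subset by (auto simp: expanding_automaton_def intro: finite_subset)
  fix q assume q: "q \<in> Q"
  {
    fix a assume a: "a \<in> C"
    show "t q a \<in> Q" using expanding q a C_subset by (auto simp: expanding_automaton_def)
    show "length (out q a) = 1" "hd (out q a) \<in> C"
      using output_on_C[OF q a] by (metis length_Cons list.size(3) One_nat_def)+
  }
  have "inj_on (\<lambda>a. hd (out q a)) C"
  proof (rule inj_onI)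
    fix a b assume ab: "a \<in> C" "b \<in> C" "hd (out q a) = hd (out q b)"
    then have "out q a = out q b" using output_on_C[OF q] by metis
    then have "state_map C t out q [a] = state_map C t out q [b]"
      using ab(1,2) by (simp add: state_map_def)
    moreover have "inj_on (state_map C t out q) (lists C)"
      using state_map_C_Bij[OF q] by (simp add: Bij_def bij_betw_def)
    ultimately show "a = b" using ab(1,2) by (auto dest: inj_onD)
  qed
  moreover have "(\<lambda>a. hd (out q a)) ` C \<subseteq> C" using output_on_C[OF q] by blast
  ultimately show "bij_betw (\<lambda>a. hd (out q a)) C C"
    using endo_inj_surj[OF fin] by (simp add: bij_betw_def)
qed

lemma res_image: "res ` T = generate (BijGroup (lists C)) (state_map C t out ` Q)"
proof -
  have gens: "state_map C t out ` Q = res ` state_map S t out ` Q"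
    using state_map_C by auto
  have img: "res ` T = gen_semigroup (lists C) (state_map C t out ` Q)"
    unfolding gens by (rule gen_semigroup_image) (rule res_compose)
  have "generate (BijGroup (lists C)) (state_map C t out ` Q) = gen_semigroup (lists C) (state_map C t out ` Q)"
  proof (rule generate_BijGroup_eq_gen_semigroup)
    show "state_map C t out ` Q \<subseteq> Bij (lists C)" using state_map_C_Bij by blast
    show "(\<lambda>w\<in>lists C. w) \<in> gen_semigroup (lists C) (state_map C t out ` Q)"
      using img res_identity identity_in by (metis imageI)
    show "inv\<^bsub>BijGroup (lists C)\<^esub> f \<in> gen_semigroup (lists C) (state_map C t out ` Q)"
      if f: "f \<in> state_map C t out ` Q" for f
    proof -
      obtain q where q: "q \<in> Q" "f = res (state_map S t out q)" using f by (auto simp: state_map_C)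
      then have "state_map S t out q \<in> T" by (intro gen_semigroup.base imageI)
      then show ?thesis using res_inv img q(2) by simp
    qed
  qed
  then show ?thesis using img by simp
qed

lemma res_iso: "res \<in> iso (automaton_semigroup_of Q S t out) (automaton_group_of Q C t out)"
proof (rule isoI)
  have carriers: "carrier (automaton_semigroup_of Q S t out) = T"
      "carrier (automaton_group_of Q C t out) = res ` T"
    using res_image by (simp_all add: automaton_semigroup_of_def map_semigroup_def automaton_group_of_def)
  then show "bij_betw res (carrier (automaton_semigroup_of Q S t out)) (carrier (automaton_group_of Q C t out))"
    using res_inj by (simp add: bij_betw_def)
  show "res \<in> hom (automaton_semigroup_of Q S t out) (automaton_group_of Q C t out)"
  proof (rule homI)
    fix f g assume "f \<in> carrier (automaton_semigroup_of Q S t out)" "g \<in> carrier (automaton_semigroup_of Q S t out)"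
    then show "res (f \<otimes>\<^bsub>automaton_semigroup_of Q S t out\<^esub> g) = res f \<otimes>\<^bsub>automaton_group_of Q C t out\<^esub> res g"
      using carriers res_compose res_Bij
      by (simp add: automaton_semigroup_of_def map_semigroup_def automaton_group_of_def BijGroup_def)
  qed (use carriers in blast)
qed

end

lemma expanding_semigroup_group_is_automaton_group:
  assumes "expanding_automaton Q S t out" "group G" "G \<cong> automaton_semigroup_of Q S t out"
  shows "\<exists>C. invertible_synchronous_automaton Q C t out \<and> G \<cong> automaton_group_of Q C t out"
proof -
  obtain e where "expanding_group Q S t out e"
    using group_iso_state_semigroup[OF assms(2,3)] assms(1) by (auto simp: expanding_group_def)
  then interpret expanding_group Q S t out e .
  show ?thesis using restricted_invertible is_isoI[OF res_iso] assms(3) iso_trans by blast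
qed

(* An invertible synchronous automaton together with injective tags for three kinds of new
   states: z acts as the identity, j1 q acts as q and j2 q acts as the inverse of q. *)
locale symmetric_extension =
  fixes Q :: "'q set" and S t out and z :: 'r and j1 j2 :: "'q \<Rightarrow> 'r"
  assumes invertible: "invertible_synchronous_automaton Q S t out"
    and inj1: "inj j1" and inj2: "inj j2"
    and z1: "z \<notin> range j1" and z2: "z \<notin> range j2"
    and disjoint: "range j1 \<inter> range j2 = {}"
begin

definition letter :: "'q \<Rightarrow> nat \<Rightarrow> nat" where
  "letter q a = hd (out q a)"

definition letter_inv :: "'q \<Rightarrow> nat \<Rightarrow> nat" where
  "letter_inv q b = inv_into S (letter q) b"

definition t' :: "'r \<Rightarrow> nat \<Rightarrow> 'r" where
  "t' s a = (if s \<in> range j1 then j1 (t (inv_into UNIV j1 s) a)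
     else if s \<in> range j2 then j2 (t (inv_into UNIV j2 s) (letter_inv (inv_into UNIV j2 s) a)) else z)"

definition out' :: "'r \<Rightarrow> nat \<Rightarrow> nat list" where
  "out' s a = (if s \<in> range j1 then out (inv_into UNIV j1 s) a
     else if s \<in> range j2 then [letter_inv (inv_into UNIV j2 s) a] else [a])"

definition Q' :: "'r set" where
  "Q' = insert z (j1 ` Q \<union> j2 ` Q)"

lemma j2_not_j1: "j2 q \<notin> range j1"
  using disjoint by blast

lemma t'_simps [simp]:
  "t' (j1 q) a = j1 (t q a)" "t' (j2 q) a = j2 (t q (letter_inv q a))" "t' z a = z"
  using z1 z2 j2_not_j1 by (simp_all add: t'_def inv_f_f[OF inj1] inv_f_f[OF inj2])

lemma out'_simps [simp]:
  "out' (j1 q) a = out q a" "out' (j2 q) a = [letter_inv q a]" "out' z a = [a]"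
  using z1 z2 j2_not_j1 by (simp_all add: out'_def inv_f_f[OF inj1] inv_f_f[OF inj2])

lemma out_letter:
  assumes "q \<in> Q" "a \<in> S"
  shows "out q a = [letter q a] \<and> letter q a \<in> S \<and> t q a \<in> Q"
proof -
  have "length (out q a) = 1" "hd (out q a) \<in> S" "t q a \<in> Q"
    using invertible assms by (auto simp: invertible_synchronous_automaton_def)
  then show ?thesis by (cases "out q a") (auto simp: letter_def)
qed

lemma letter_inverse:
  assumes "q \<in> Q" "a \<in> S"
  shows "letter_inv q a \<in> S \<and> letter q (letter_inv q a) = a \<and> letter_inv q (letter q a) = a"
proof -
  have "bij_betw (letter q) S S"
    using invertible assms(1) by (simp add: invertible_synchronous_automaton_def letter_def[abs_def])
  then show ?thesis
    using assms(2) by (auto simp: letter_inv_def bij_betw_def inv_into_into f_inv_into_f inv_into_f_f)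
qed

lemma induced_j1: "q \<in> Q \<Longrightarrow> w \<in> lists S \<Longrightarrow> induced t' out' (j1 q) w = induced t out q w"
  by (induction w arbitrary: q) (simp_all add: out_letter)

lemma induced_z: "induced t' out' z w = w"
  by (induction w) simp_all

lemma induced_j2_right: "q \<in> Q \<Longrightarrow> w \<in> lists S \<Longrightarrow> induced t out q (induced t' out' (j2 q) w) = w"
  by (induction w arbitrary: q) (simp_all add: out_letter letter_inverse)

lemma induced_j2_left: "q \<in> Q \<Longrightarrow> w \<in> lists S \<Longrightarrow> induced t' out' (j2 q) (induced t out q w) = w"
  by (induction w arbitrary: q) (simp_all add: out_letter letter_inverse)

lemma extension_expanding: "expanding_automaton Q' S t' out'"
proof -
  have "t' s a \<in> Q' \<and> out' s a \<in> lists S \<and> out' s a \<noteq> []" if s: "s \<in> Q'" and a: "a \<in> S" for s a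
  proof -
    consider "s = z" | q where "q \<in> Q" "s = j1 q" | q where "q \<in> Q" "s = j2 q"
      using s by (auto simp: Q'_def)
    then show ?thesis
    proof cases
      case 1
      then show ?thesis using a by (simp add: Q'_def)
    next
      case (2 q)
      then show ?thesis using out_letter[OF _ a] by (simp add: Q'_def)
    next
      case (3 q)
      then show ?thesis using letter_inverse[OF _ a] out_letter[of q "letter_inv q a"] by (simp add: Q'_def)
    qed
  qed
  then show ?thesis using invertible
    by (simp add: expanding_automaton_def invertible_synchronous_automaton_def)
qed

abbreviation BG :: "(nat list \<Rightarrow> nat list) monoid" where
  "BG \<equiv> BijGroup (lists S)"

lemma state_map_inverse:
  assumes q: "q \<in> Q"
  shows "state_map S t out q \<in> Bij (lists S) \<and> inv\<^bsub>BG\<^esub> (state_map S t out q) = state_map S t' out' (j2 q)"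
proof -
  have "j2 q \<in> Q'" using q by (simp add: Q'_def)
  then have "induced t out q w \<in> lists S" "induced t' out' (j2 q) w \<in> lists S" if "w \<in> lists S" for w
    using expanding_induced[OF invertible_synchronous_is_expanding[OF invertible] q that]
      expanding_induced[OF extension_expanding _ that] by auto
  then show ?thesis
    using Bij_inverse_pair[of "state_map S t out q" "lists S" "state_map S t' out' (j2 q)"]
      induced_j2_left[OF q] induced_j2_right[OF q]
    by (auto simp: state_map_def image_subset_iff)
qed

lemma extension_states:
  "state_map S t' out' ` Q' =
     insert \<one>\<^bsub>BG\<^esub> (state_map S t out ` Q \<union> (\<lambda>f. inv\<^bsub>BG\<^esub> f) ` state_map S t out ` Q)"
proof -
  have "state_map S t' out' z = \<one>\<^bsub>BG\<^esub>"
    using induced_z by (auto simp: state_map_def BijGroup_simps)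
  moreover have "state_map S t' out' (j1 q) = state_map S t out q" if "q \<in> Q" for q
    using induced_j1[OF that] by (auto simp: state_map_def)
  ultimately show ?thesis using state_map_inverse
    by (simp add: Q'_def image_Un image_image cong: image_cong)
qed

lemma generate_Bij: "generate BG (state_map S t out ` Q) \<subseteq> Bij (lists S)"
proof -
  have "state_map S t out ` Q \<subseteq> carrier BG" using state_map_inverse by (auto simp: BijGroup_simps)
  then show ?thesis using group.generate_incl[OF group_BijGroup] by (simp add: BijGroup_simps)
qed

lemma extension_generates:
  "gen_semigroup (lists S) (state_map S t' out' ` Q') = generate BG (state_map S t out ` Q)"
proof -
  let ?F = "state_map S t out ` Q" and ?F' = "state_map S t' out' ` Q'"
  have F_Bij: "?F \<subseteq> carrier BG" using state_map_inverse by (auto simp: BijGroup_simps)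
  have F'_gen: "?F' \<subseteq> generate BG ?F"
    unfolding extension_states by (auto intro: generate.intros)
  then have "generate BG ?F' \<subseteq> generate BG ?F"
    by (rule group.generate_subgroup_incl[OF group_BijGroup _ group.generate_is_subgroup[OF group_BijGroup F_Bij]])
  moreover have "generate BG ?F \<subseteq> generate BG ?F'"
    by (rule group.mono_generate[OF group_BijGroup]) (auto simp: extension_states)
  moreover have "generate BG ?F' = gen_semigroup (lists S) ?F'"
  proof (rule generate_BijGroup_eq_gen_semigroup)
    show "?F' \<subseteq> Bij (lists S)" using F'_gen generate_Bij by blast
    show "(\<lambda>x\<in>lists S. x) \<in> gen_semigroup (lists S) ?F'"
      by (rule gen_semigroup.base) (simp add: extension_states BijGroup_simps)
    show "inv\<^bsub>BG\<^esub> f \<in> gen_semigroup (lists S) ?F'" if "f \<in> ?F'" for f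
    proof (rule gen_semigroup.base)
      have "inv\<^bsub>BG\<^esub> (inv\<^bsub>BG\<^esub> (state_map S t out q)) = state_map S t out q" if "q \<in> Q" for q
        using F_Bij that group.inv_inv[OF group_BijGroup] by blast
      then show "inv\<^bsub>BG\<^esub> f \<in> ?F'"
        using that monoid.inv_one[OF group.is_monoid[OF group_BijGroup]]
        unfolding extension_states by auto
    qed
  qed
  ultimately show ?thesis by simp
qed

lemma extension_iso: "(\<lambda>f. f) \<in> iso (automaton_group_of Q S t out) (automaton_semigroup_of Q' S t' out')"
proof (rule isoI)
  have carriers: "carrier (automaton_group_of Q S t out) = generate BG (state_map S t out ` Q)"
    "carrier (automaton_semigroup_of Q' S t' out') = generate BG (state_map S t out ` Q)"
    using extension_generates
    by (simp_all add: automaton_group_of_def automaton_semigroup_of_def map_semigroup_def)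
  then show "bij_betw (\<lambda>f. f) (carrier (automaton_group_of Q S t out)) (carrier (automaton_semigroup_of Q' S t' out'))"
    by (simp add: bij_betw_def)
  show "(\<lambda>f. f) \<in> hom (automaton_group_of Q S t out) (automaton_semigroup_of Q' S t' out')"
  proof (rule homI)
    fix f g assume "f \<in> carrier (automaton_group_of Q S t out)" "g \<in> carrier (automaton_group_of Q S t out)"
    then have "f \<in> Bij (lists S)" "g \<in> Bij (lists S)" using carriers generate_Bij by auto
    then show "f \<otimes>\<^bsub>automaton_group_of Q S t out\<^esub> g = f \<otimes>\<^bsub>automaton_semigroup_of Q' S t' out'\<^esub> g"
      by (simp add: automaton_group_of_def automaton_semigroup_of_def map_semigroup_def BijGroup_simps)
  qed (use carriers in simp)
qed

end

lemma automaton_group_is_expanding_semigroup: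
  fixes Q :: "'q set" and z :: 'r and j1 j2 :: "'q \<Rightarrow> 'r"
  assumes "invertible_synchronous_automaton Q S t out" "inj j1" "inj j2"
    "z \<notin> range j1" "z \<notin> range j2" "range j1 \<inter> range j2 = {}"
    "G \<cong> automaton_group_of Q S t out"
  shows "\<exists>t' out'. expanding_automaton (insert z (j1 ` Q \<union> j2 ` Q)) S t' out' \<and>
     G \<cong> automaton_semigroup_of (insert z (j1 ` Q \<union> j2 ` Q)) S t' out'"
proof -
  interpret symmetric_extension Q S t out z j1 j2
    using assms(1-6) by (simp add: symmetric_extension_def)
  show ?thesis
    using extension_expanding is_isoI[OF extension_iso] assms(7) iso_trans unfolding Q'_def by blast
qed

lemma nat_state_tags:
  "inj (\<lambda>n::nat. 2 * n + 1)" "inj (\<lambda>n::nat. 2 * n + 2)"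
  "(0::nat) \<notin> range (\<lambda>n. 2 * n + 1)" "(0::nat) \<notin> range (\<lambda>n. 2 * n + 2)"
  "range (\<lambda>n::nat. 2 * n + 1) \<inter> range (\<lambda>n. 2 * n + 2) = {}"
  by (auto simp: inj_def) presburger

definition tag_state :: "nat set \<Rightarrow> nat set" where
  "tag_state q = insert 0 (Suc ` q)"

definition tag_inverse :: "nat set \<Rightarrow> nat set" where
  "tag_inverse q = Suc ` tag_state q"

lemma set_state_tags:
  "inj tag_state" "inj tag_inverse" "{} \<notin> range tag_state" "{} \<notin> range tag_inverse"
  "range tag_state \<inter> range tag_inverse = {}"
proof -
  show "inj tag_state"
  proof (rule injI)
    fix x y assume "tag_state x = tag_state y"
    then have "Suc ` x = Suc ` y" unfolding tag_state_def by (metis Diff_insert_absorb Zero_not_Suc imageE)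
    then show "x = y" by (simp add: inj_image_eq_iff)
  qed
  then show "inj tag_inverse" by (simp add: inj_def tag_inverse_def inj_image_eq_iff)
  show "{} \<notin> range tag_state" "{} \<notin> range tag_inverse" "range tag_state \<inter> range tag_inverse = {}"
    by (auto simp: tag_state_def tag_inverse_def)
qed

lemma automaton_group_imp_expanding_semigroup:
  "iso_automaton_group G \<Longrightarrow> iso_expanding_automaton_semigroup G"
proof -
  assume "iso_automaton_group G"
  then obtain Q :: "nat set" and S t out where Q: "finite Q" "invertible_synchronous_automaton Q S t out"
      "G \<cong> automaton_group_of Q S t out"
    by (auto simp: iso_automaton_group_def)
  have "finite (insert 0 ((\<lambda>n::nat. 2 * n + 1) ` Q \<union> (\<lambda>n. 2 * n + 2) ` Q))" using Q(1) by simp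
  then show ?thesis
    using automaton_group_is_expanding_semigroup[OF Q(2) nat_state_tags Q(3)]
    unfolding iso_expanding_automaton_semigroup_def by blast
qed

lemma self_similar_group_imp_expanding_semigroup:
  "iso_self_similar_group G \<Longrightarrow> iso_expanding_self_similar_semigroup G"
proof -
  assume "iso_self_similar_group G"
  then obtain Q :: "nat set set" and S t out where
    "invertible_synchronous_automaton Q S t out" "G \<cong> automaton_group_of Q S t out"
    by (auto simp: iso_self_similar_group_def)
  from automaton_group_is_expanding_semigroup[OF this(1) set_state_tags this(2)]
  show ?thesis unfolding iso_expanding_self_similar_semigroup_def by blast
qed

lemma expanding_semigroup_imp_automaton_group:
  "group G \<Longrightarrow> iso_expanding_automaton_semigroup G \<Longrightarrow> iso_automaton_group G"
proof -
  assume "group G" "iso_expanding_automaton_semigroup G"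
  then obtain Q :: "nat set" and S t out where
    "finite Q" "expanding_automaton Q S t out" "G \<cong> automaton_semigroup_of Q S t out"
    by (auto simp: iso_expanding_automaton_semigroup_def)
  with expanding_semigroup_group_is_automaton_group[OF this(2) \<open>group G\<close> this(3)]
  show ?thesis unfolding iso_automaton_group_def by blast
qed

lemma expanding_semigroup_imp_self_similar_group:
  "group G \<Longrightarrow> iso_expanding_self_similar_semigroup G \<Longrightarrow> iso_self_similar_group G"
proof -
  assume "group G" "iso_expanding_self_similar_semigroup G"
  then obtain Q :: "nat set set" and S t out where
    "expanding_automaton Q S t out" "G \<cong> automaton_semigroup_of Q S t out"
    by (auto simp: iso_expanding_self_similar_semigroup_def)
  from expanding_semigroup_group_is_automaton_group[OF this(1) \<open>group G\<close> this(2)]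
  show ?thesis unfolding iso_self_similar_group_def by blast
qed

theorem mainTheorem10:
  fixes G :: "('g, 'b) monoid_scheme"
  assumes "group G"
  shows "(iso_automaton_group G \<longleftrightarrow> iso_expanding_automaton_semigroup G) \<and>
         (iso_self_similar_group G \<longleftrightarrow> iso_expanding_self_similar_semigroup G)"
  using automaton_group_imp_expanding_semigroup self_similar_group_imp_expanding_semigroup
    expanding_semigroup_imp_automaton_group[OF assms] expanding_semigroup_imp_self_similar_group[OF assms]
  by blast

end
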